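(* An inverse semigroup $S$ is $E$-unitary if and only if there exist a topological space $X$ and a topologically principal topological partial action $\theta=(\{X_s\}_{s\in S},\{\theta_s\}_{s\in S})$ of $S$ on $X$ such that (i) $\theta$ factors through $\mathbf{G}(S)$, i.e. there is a partial action $\widetilde\theta=(\{X_{[s]}\}_{[s]\in\mathbf{G}(S)},\{\widetilde\theta_{[s]}\}_{[s]\in\mathbf{G}(S)})$ of $\mathbf{G}(S)$ on $X$ with $\widetilde\theta_{[s]}(x)=\theta_s(x)$ for all $s\in S$ and $x\in X_{s^*}$; and (ii) $E(S)=\{s\in S:\theta_s\text{ is an idempotent of }\mathcal{I}(X)\}$.
   Context: Inverse semigroups: $E(S)$ idempotents; $s\le t$ iff $s=ts^*s$. $S$ is $E$-unitary if $e\le s$ with $e\in E(S)$ implies $s\in E(S)$. $\mathbf{G}(S)$ is the maximal group image: the quotient of $S$ by the congruence $s\sim t$ iff there is $u\in S$ with $u\le s$ and $u\le t$; $[s]$ denotes the class of $s$. $\mathcal{I}(X)$ is the inverse semigroup of partial bijections of $X$; its idempotents are identity maps of subsets. A topological partial action of $S$ (or of a group, viewed as an inverse semigroup) on $X$: open $X_s$, homeomorphisms $\theta_s:X_{s^*}\to X_s$ such that $s\mapsto\theta_s$ is a partial homomorphism into $\mathcal{I}(X)$ ($\theta_{s^*}=\theta_s^{-1}$, $\theta_s\theta_t\le\theta_{st}$, $s\le t\Rightarrow\theta_s\le\theta_t$) and $X=\bigcup_{e\in E(S)}X_e$. With $S_x=\{s:x\in X_{s^*}\}$, let $\Lambda(\theta)$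 be the set of $x\in X$ such that every $s\in S_x$ with $\theta_s(x)=x$ admits $e\in E(S)\cap S_x$ with $e\le s$; $\theta$ is topologically principal if $\Lambda(\theta)$ is dense in $X$. *)

theory Defs
  imports "HOL-Analysis.Analysis"
begin

definition inv_semigroup :: "('a \<Rightarrow> 'a \<Rightarrow> 'a) \<Rightarrow> bool" where
  "inv_semigroup m \<longleftrightarrow>
     (\<forall>a b c. m (m a b) c = m a (m b c)) \<and>
     (\<forall>s. \<exists>!t. m (m s t) s = s \<and> m (m t s) t = t)"

definition sinv :: "('a \<Rightarrow> 'a \<Rightarrow> 'a) \<Rightarrow> 'a \<Rightarrow> 'a" where
  "sinv m s = (THE t. m (m s t) s = s \<and> m (m t s) t = t)"

definition idems :: "('a \<Rightarrow> 'a \<Rightarrow> 'a) \<Rightarrow> 'a set" where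
  "idems m = {e. m e e = e}"

definition nat_le :: "('a \<Rightarrow> 'a \<Rightarrow> 'a) \<Rightarrow> 'a \<Rightarrow> 'a \<Rightarrow> bool" where
  "nat_le m s t \<longleftrightarrow> s = m t (m (sinv m s) s)"

definition E_unitary :: "('a \<Rightarrow> 'a \<Rightarrow> 'a) \<Rightarrow> bool" where
  "E_unitary m \<longleftrightarrow> (\<forall>e s. e \<in> idems m \<and> nat_le m e s \<longrightarrow> s \<in> idems m)"

text \<open>Maximal group image G(S): quotient by s ~ t iff some u is below both.\<close>
definition mgi_rel :: "('a \<Rightarrow> 'a \<Rightarrow> 'a) \<Rightarrow> ('a \<times> 'a) set" where
  "mgi_rel m = {(s, t). \<exists>u. nat_le m u s \<and> nat_le m u t}"

definition cls :: "('a \<Rightarrow> 'a \<Rightarrow> 'a) \<Rightarrow> 'a \<Rightarrow> 'a set" where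
  "cls m s = mgi_rel m `` {s}"

definition G_carrier :: "('a \<Rightarrow> 'a \<Rightarrow> 'a) \<Rightarrow> 'a set set" where
  "G_carrier m = UNIV // mgi_rel m"

definition G_mult :: "('a \<Rightarrow> 'a \<Rightarrow> 'a) \<Rightarrow> 'a set \<Rightarrow> 'a set \<Rightarrow> 'a set" where
  "G_mult m A B = cls m (m (SOME a. a \<in> A) (SOME b. b \<in> B))"

definition G_star :: "('a \<Rightarrow> 'a \<Rightarrow> 'a) \<Rightarrow> 'a set \<Rightarrow> 'a set" where
  "G_star m A = cls m (sinv m (SOME a. a \<in> A))"

text \<open>Partial bijections of X are partial maps ('b \<rightharpoonup> 'b);
  theta s has domain Xs (st s) and range Xs s. Order of I(X) is map_le, product is map_comp.\<close>
definition top_partial_action ::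
  "'b topology \<Rightarrow> 'c set \<Rightarrow> ('c \<Rightarrow> 'c \<Rightarrow> 'c) \<Rightarrow> ('c \<Rightarrow> 'c) \<Rightarrow>
   ('c \<Rightarrow> 'b set) \<Rightarrow> ('c \<Rightarrow> ('b \<rightharpoonup> 'b)) \<Rightarrow> bool" where
  "top_partial_action T C mm st Xs \<theta> \<longleftrightarrow>
     (\<forall>s\<in>C. openin T (Xs s)) \<and>
     (\<forall>s\<in>C. dom (\<theta> s) = Xs (st s) \<and> ran (\<theta> s) = Xs s) \<and>
     (\<forall>s\<in>C. homeomorphic_map (subtopology T (Xs (st s))) (subtopology T (Xs s))
                               (\<lambda>x. the (\<theta> s x))) \<and>
     (\<forall>s\<in>C. \<forall>x y. \<theta> (st s) y = Some x \<longleftrightarrow> \<theta> s x = Some y) \<and>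
     (\<forall>s\<in>C. \<forall>t\<in>C. map_le (map_comp (\<theta> s) (\<theta> t)) (\<theta> (mm s t))) \<and>
     (\<forall>s\<in>C. \<forall>t\<in>C. s = mm t (mm (st s) s) \<longrightarrow> map_le (\<theta> s) (\<theta> t)) \<and>
     topspace T = (\<Union>e\<in>{e\<in>C. mm e e = e}. Xs e)"

definition Lambda_set ::
  "('a \<Rightarrow> 'a \<Rightarrow> 'a) \<Rightarrow> 'b topology \<Rightarrow> ('a \<Rightarrow> 'b set) \<Rightarrow> ('a \<Rightarrow> ('b \<rightharpoonup> 'b)) \<Rightarrow> 'b set" where
  "Lambda_set m T Xs \<theta> = {x \<in> topspace T. \<forall>s. x \<in> Xs (sinv m s) \<and> \<theta> s x = Some x \<longrightarrow>
       (\<exists>e\<in>idems m. x \<in> Xs (sinv m e) \<and> nat_le m e s)}"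

definition top_principal ::
  "('a \<Rightarrow> 'a \<Rightarrow> 'a) \<Rightarrow> 'b topology \<Rightarrow> ('a \<Rightarrow> 'b set) \<Rightarrow> ('a \<Rightarrow> ('b \<rightharpoonup> 'b)) \<Rightarrow> bool" where
  "top_principal m T Xs \<theta> \<longleftrightarrow> T closure_of (Lambda_set m T Xs \<theta>) = topspace T"

definition good_action ::
  "('a \<Rightarrow> 'a \<Rightarrow> 'a) \<Rightarrow> 'b topology \<Rightarrow> ('a \<Rightarrow> 'b set) \<Rightarrow> ('a \<Rightarrow> ('b \<rightharpoonup> 'b)) \<Rightarrow> bool" where
  "good_action m T Xs \<theta> \<longleftrightarrow>
     top_partial_action T UNIV m (sinv m) Xs \<theta> \<and>
     top_principal m T Xs \<theta> \<and>
     (\<exists>Xg \<theta>g. top_partial_action T (G_carrier m) (G_mult m) (G_star m) Xg \<theta>g \<and>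
        (\<forall>s x. x \<in> Xs (sinv m s) \<longrightarrow> \<theta>g (cls m s) x = \<theta> s x)) \<and>
     idems m = {s. map_comp (\<theta> s) (\<theta> s) = \<theta> s}"

end

theory Submission
  imports Defs
begin

text \<open>If \<open>\<theta>\<close> factors through \<open>G(S)\<close> and \<open>e \<le> s\<close> with \<open>e\<close> idempotent, then \<open>[s] = [e]\<close>
  is idempotent in the group \<open>G(S)\<close>, so it acts by a partial identity; \<open>\<theta>\<^sub>s\<close> is a
  restriction of that map, hence idempotent in \<open>I(X)\<close>, and (ii) puts \<open>s\<close> in \<open>E(S)\<close>.

  Conversely let \<open>S\<close> act on the discrete space \<open>S\<close> by its Wagner--Preston representation,
  \<open>\<theta>\<^sub>s x = s x\<close> on \<open>s\<^sup>*s S\<close>. A point \<open>x\<close> fixed by \<open>s\<close> lies in the domain of the idempotent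
  \<open>x x\<^sup>* \<le> s\<close>, so \<open>\<Lambda>(\<theta>) = X\<close>, and \<open>\<theta>\<^sub>s\<close> is idempotent exactly when \<open>s\<close> is. When \<open>S\<close> is
  \<open>E\<close>-unitary, elements \<open>s\<close>, \<open>t\<close> of one class of \<open>G(S)\<close> have \<open>s t\<^sup>*\<close> idempotent, hence
  \<open>s t\<^sup>* t = t s\<^sup>* s\<close>; so \<open>\<theta>\<^sub>s\<close> and \<open>\<theta>\<^sub>t\<close> agree where both are defined and glue to an
  action of \<open>G(S)\<close>.\<close>

section \<open>Partial maps and partial actions\<close>

lemma homeomorphic_map_discrete_partial:
  assumes "dom f = D" "ran f = R" "D \<subseteq> U" "R \<subseteq> U" "inj_on f D"
  shows "homeomorphic_map (subtopology (discrete_topology U) D) (subtopology (discrete_topology U) R)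
           (\<lambda>x. the (f x))"
proof -
  have "(\<lambda>x. the (f x)) ` D = R"
    using assms(1,2) unfolding dom_def ran_def by force
  moreover have "inj_on (\<lambda>x. the (f x)) D"
    using assms(1,5) unfolding inj_on_def dom_def by (metis (mono_tags) mem_Collect_eq option.expand)
  moreover have "subtopology (discrete_topology U) D = discrete_topology D"
    "subtopology (discrete_topology U) R = discrete_topology R"
    using assms(3,4) by (simp_all add: subtopology_discrete_topology Int_absorb1)
  ultimately show ?thesis
    by (auto simp: homeomorphic_eq_everything_map open_map_into_discrete_topology
        closed_map_into_discrete_topology)
qed

lemma inj_on_dom_if_partial_inverse:
  assumes "\<And>x y. g y = Some x \<longleftrightarrow> f x = Some y" shows "inj_on f (dom f)"
proof (rule inj_onI)
  fix x x' assume "x \<in> dom f" "f x = f x'"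
  then obtain y where "f x = Some y" "f x' = Some y" by (metis domD)
  then show "x = x'" using assms by (metis option.inject)
qed

lemma map_comp_idem_if_fixes: "(\<And>x y. f x = Some y \<Longrightarrow> y = x) \<Longrightarrow> map_comp f f = f"
  by (rule ext) (auto simp: map_comp_def split: option.split)

lemma top_partial_action_open: "top_partial_action T C mm st Xs \<theta> \<Longrightarrow> s \<in> C \<Longrightarrow> openin T (Xs s)"
  unfolding top_partial_action_def by (elim conjE) blast

lemma top_partial_action_dom: "top_partial_action T C mm st Xs \<theta> \<Longrightarrow> s \<in> C \<Longrightarrow> dom (\<theta> s) = Xs (st s)"
  unfolding top_partial_action_def by (elim conjE) blast

lemma top_partial_action_inverse:
  "top_partial_action T C mm st Xs \<theta> \<Longrightarrow> s \<in> C \<Longrightarrow> \<theta> (st s) y = Some x \<longleftrightarrow> \<theta> s x = Some y"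
  unfolding top_partial_action_def by (elim conjE) blast

lemma top_partial_action_mult:
  "top_partial_action T C mm st Xs \<theta> \<Longrightarrow> s \<in> C \<Longrightarrow> t \<in> C \<Longrightarrow> map_le (map_comp (\<theta> s) (\<theta> t)) (\<theta> (mm s t))"
  unfolding top_partial_action_def by (elim conjE) blast

lemma top_partial_action_topspace:
  "top_partial_action T C mm st Xs \<theta> \<Longrightarrow> topspace T = (\<Union>e\<in>{e\<in>C. mm e e = e}. Xs e)"
  unfolding top_partial_action_def by (elim conjE)

lemma top_partial_action_fixes:
  assumes act: "top_partial_action T C mm st Xs \<theta>"
    and c: "c \<in> C" "st c = c" "mm c c = c" and xy: "\<theta> c x = Some y"
  shows "y = x"
proof -
  have "\<theta> c y = Some x" using top_partial_action_inverse[OF act c(1)] c(2) xy by simp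
  then have "map_comp (\<theta> c) (\<theta> c) x = Some x" using xy by simp
  then show ?thesis
    using top_partial_action_mult[OF act c(1) c(1)] c(3) xy unfolding map_le_def
    by (metis domI option.inject)
qed

definition glue :: "'i set \<Rightarrow> ('i \<Rightarrow> 'x \<rightharpoonup> 'y) \<Rightarrow> 'x \<rightharpoonup> 'y" where
  "glue I f x = (if \<exists>i\<in>I. x \<in> dom (f i) then f (SOME i. i \<in> I \<and> x \<in> dom (f i)) x else None)"

lemma glue_eq_Some_iff:
  assumes "\<And>i j x. i \<in> I \<Longrightarrow> j \<in> I \<Longrightarrow> x \<in> dom (f i) \<Longrightarrow> x \<in> dom (f j) \<Longrightarrow> f i x = f j x"
  shows "glue I f x = Some y \<longleftrightarrow> (\<exists>i\<in>I. f i x = Some y)"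
proof -
  let ?j = "SOME j. j \<in> I \<and> x \<in> dom (f j)"
  have j: "?j \<in> I \<and> x \<in> dom (f ?j)" if "i \<in> I" "x \<in> dom (f i)" for i
    using that by (metis (mono_tags, lifting) someI)
  show ?thesis
  proof
    assume glued: "glue I f x = Some y"
    then obtain i where "i \<in> I" "x \<in> dom (f i)" unfolding glue_def by (auto split: if_splits)
    then have "?j \<in> I" "glue I f x = f ?j x" using j unfolding glue_def by auto
    then have "?j \<in> I" "f ?j x = Some y" using glued by simp_all
    then show "\<exists>i\<in>I. f i x = Some y" by blast
  next
    assume "\<exists>i\<in>I. f i x = Some y"
    then obtain i where i: "i \<in> I" "f i x = Some y" by blast
    then have "f ?j x = f i x" using assms j by blast
    then show "glue I f x = Some y" using i unfolding glue_def by auto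
  qed
qed

section \<open>Inverse semigroups\<close>

locale inverse_semigroup =
  fixes m :: "'a \<Rightarrow> 'a \<Rightarrow> 'a" (infixl \<open>\<cdot>\<close> 70)
  assumes inverse_semigroup: "inv_semigroup m"
begin

abbreviation inverse :: "'a \<Rightarrow> 'a" (\<open>_\<^sup>\<star>\<close> [1000] 999) where "s\<^sup>\<star> \<equiv> sinv m s"

lemma assoc: "a \<cdot> b \<cdot> c = a \<cdot> (b \<cdot> c)"
  using inverse_semigroup unfolding inv_semigroup_def by blast

lemma unique_inverse: "\<exists>!t. s \<cdot> t \<cdot> s = s \<and> t \<cdot> s \<cdot> t = t"
  using inverse_semigroup unfolding inv_semigroup_def by blast

lemma inverse_laws [simp]:
  "s \<cdot> (s\<^sup>\<star> \<cdot> s) = s" "s\<^sup>\<star> \<cdot> (s \<cdot> s\<^sup>\<star>) = s\<^sup>\<star>"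
  "s \<cdot> (s\<^sup>\<star> \<cdot> (s \<cdot> x)) = s \<cdot> x" "s\<^sup>\<star> \<cdot> (s \<cdot> (s\<^sup>\<star> \<cdot> x)) = s\<^sup>\<star> \<cdot> x"
proof -
  have "s \<cdot> s\<^sup>\<star> \<cdot> s = s \<and> s\<^sup>\<star> \<cdot> s \<cdot> s\<^sup>\<star> = s\<^sup>\<star>"
    unfolding sinv_def by (rule theI'[OF unique_inverse])
  then show "s \<cdot> (s\<^sup>\<star> \<cdot> s) = s" "s\<^sup>\<star> \<cdot> (s \<cdot> s\<^sup>\<star>) = s\<^sup>\<star>"
    "s \<cdot> (s\<^sup>\<star> \<cdot> (s \<cdot> x)) = s \<cdot> x" "s\<^sup>\<star> \<cdot> (s \<cdot> (s\<^sup>\<star> \<cdot> x)) = s\<^sup>\<star> \<cdot> x"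
    by (metis assoc)+
qed

lemma inverse_eqI: "s \<cdot> t \<cdot> s = s \<Longrightarrow> t \<cdot> s \<cdot> t = t \<Longrightarrow> t = s\<^sup>\<star>"
  using unique_inverse[of s] inverse_laws(1,2)[of s] by (metis assoc)

lemma inverse_inverse [simp]: "(s\<^sup>\<star>)\<^sup>\<star> = s"
  by (metis assoc inverse_eqI inverse_laws(1,2))

lemma inverse_idempotent: "e \<cdot> e = e \<Longrightarrow> e\<^sup>\<star> = e"
  by (metis inverse_eqI)

lemma idempotent_mult: assumes e: "e \<cdot> e = e" and f: "f \<cdot> f = f" shows "e \<cdot> f \<cdot> (e \<cdot> f) = e \<cdot> f"
proof -
  define x where "x = (e \<cdot> f)\<^sup>\<star>"
  have "f \<cdot> x \<cdot> e = x"
    unfolding x_def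
  proof (rule inverse_eqI)
    show "e \<cdot> f \<cdot> (f \<cdot> (e \<cdot> f)\<^sup>\<star> \<cdot> e) \<cdot> (e \<cdot> f) = e \<cdot> f"
      using inverse_laws(1)[of "e \<cdot> f"] e f by (metis assoc)
    show "f \<cdot> (e \<cdot> f)\<^sup>\<star> \<cdot> e \<cdot> (e \<cdot> f) \<cdot> (f \<cdot> (e \<cdot> f)\<^sup>\<star> \<cdot> e) = f \<cdot> (e \<cdot> f)\<^sup>\<star> \<cdot> e"
      using inverse_laws(2)[of "e \<cdot> f"] e f by (metis assoc)
  qed
  then have "x \<cdot> x = x"
    using inverse_laws(2)[of "e \<cdot> f"] e f unfolding x_def by (metis assoc)
  then show ?thesis
    using inverse_idempotent unfolding x_def by (metis inverse_inverse)
qed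

lemma idempotents_commute: assumes e: "e \<cdot> e = e" and f: "f \<cdot> f = f" shows "e \<cdot> f = f \<cdot> e"
proof -
  have "e \<cdot> f \<cdot> (f \<cdot> e) \<cdot> (e \<cdot> f) = e \<cdot> f" "f \<cdot> e \<cdot> (e \<cdot> f) \<cdot> (f \<cdot> e) = f \<cdot> e"
    using idempotent_mult e f by (metis assoc)+
  then show ?thesis
    using inverse_eqI inverse_idempotent idempotent_mult[OF e f] by metis
qed

lemma idempotents_commute_left: "e \<cdot> e = e \<Longrightarrow> f \<cdot> f = f \<Longrightarrow> e \<cdot> (f \<cdot> x) = f \<cdot> (e \<cdot> x)"
  by (metis assoc idempotents_commute)

lemma idempotent_conjugate: "e \<cdot> e = e \<Longrightarrow> s \<cdot> e \<cdot> s\<^sup>\<star> \<cdot> (s \<cdot> e \<cdot> s\<^sup>\<star>) = s \<cdot> e \<cdot> s\<^sup>\<star>"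
  by (metis assoc idempotents_commute_left inverse_laws(1,2))

lemma idempotent_range: "s \<cdot> s\<^sup>\<star> \<cdot> (s \<cdot> s\<^sup>\<star>) = s \<cdot> s\<^sup>\<star>"
  by (simp add: assoc)

lemma idempotent_domain: "s\<^sup>\<star> \<cdot> s \<cdot> (s\<^sup>\<star> \<cdot> s) = s\<^sup>\<star> \<cdot> s"
  by (simp add: assoc)

lemma inverse_mult: "(a \<cdot> b)\<^sup>\<star> = b\<^sup>\<star> \<cdot> a\<^sup>\<star>"
proof -
  have c: "b \<cdot> b\<^sup>\<star> \<cdot> (a\<^sup>\<star> \<cdot> a) = a\<^sup>\<star> \<cdot> a \<cdot> (b \<cdot> b\<^sup>\<star>)"
    using idempotents_commute idempotent_domain idempotent_range by blast
  show ?thesis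
  proof (rule inverse_eqI[symmetric])
    show "a \<cdot> b \<cdot> (b\<^sup>\<star> \<cdot> a\<^sup>\<star>) \<cdot> (a \<cdot> b) = a \<cdot> b"
      using c by (metis assoc inverse_laws(1,3))
    show "b\<^sup>\<star> \<cdot> a\<^sup>\<star> \<cdot> (a \<cdot> b) \<cdot> (b\<^sup>\<star> \<cdot> a\<^sup>\<star>) = b\<^sup>\<star> \<cdot> a\<^sup>\<star>"
      using c by (metis assoc inverse_laws(2,4))
  qed
qed

lemma compatible_meet:
  assumes "s \<cdot> t\<^sup>\<star> \<cdot> (s \<cdot> t\<^sup>\<star>) = s \<cdot> t\<^sup>\<star>"
  shows "s \<cdot> (t\<^sup>\<star> \<cdot> t) = t \<cdot> (s\<^sup>\<star> \<cdot> s)"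
proof -
  have flip: "t \<cdot> s\<^sup>\<star> = s \<cdot> t\<^sup>\<star>"
    using inverse_idempotent[OF assms] by (simp add: inverse_mult)
  have "s \<cdot> (t\<^sup>\<star> \<cdot> t) = s \<cdot> (s\<^sup>\<star> \<cdot> s) \<cdot> (t\<^sup>\<star> \<cdot> t)" by simp
  also have "\<dots> = s \<cdot> t\<^sup>\<star> \<cdot> (t \<cdot> s\<^sup>\<star>) \<cdot> s"
    using idempotents_commute[OF idempotent_domain idempotent_domain] by (metis assoc)
  also have "\<dots> = t \<cdot> (s\<^sup>\<star> \<cdot> s)"
    using assms flip by (metis assoc)
  finally show ?thesis .
qed

lemma nat_le_refl: "nat_le m s s"
  unfolding nat_le_def by simp

lemma nat_le_idempotent_left: assumes e: "e \<cdot> e = e" shows "nat_le m (e \<cdot> s) s"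
proof -
  have "s \<cdot> ((e \<cdot> s)\<^sup>\<star> \<cdot> (e \<cdot> s)) = s \<cdot> s\<^sup>\<star> \<cdot> (e \<cdot> s)"
    using e by (simp add: inverse_mult inverse_idempotent assoc flip: assoc[of e e])
  also have "\<dots> = e \<cdot> s"
    using idempotents_commute[OF e idempotent_range] by (metis assoc inverse_laws(1))
  finally show ?thesis unfolding nat_le_def by simp
qed

lemma inverse_of_nat_le: assumes "nat_le m u s" shows "u\<^sup>\<star> = u\<^sup>\<star> \<cdot> u \<cdot> s\<^sup>\<star>"
proof -
  have "u\<^sup>\<star> = (s \<cdot> (u\<^sup>\<star> \<cdot> u))\<^sup>\<star>" using assms unfolding nat_le_def by simp
  also have "\<dots> = u\<^sup>\<star> \<cdot> u \<cdot> s\<^sup>\<star>" by (simp add: inverse_mult inverse_idempotent[OF idempotent_domain])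
  finally show ?thesis .
qed

lemma nat_le_range_mult: assumes "nat_le m u s" shows "u \<cdot> u\<^sup>\<star> \<cdot> s = u"
proof -
  have u: "u = s \<cdot> (u\<^sup>\<star> \<cdot> u)" using assms unfolding nat_le_def .
  have "u \<cdot> u\<^sup>\<star> \<cdot> s = s \<cdot> (u\<^sup>\<star> \<cdot> u) \<cdot> (u\<^sup>\<star> \<cdot> u) \<cdot> (s\<^sup>\<star> \<cdot> s)"
    using u inverse_of_nat_le[OF assms] by (metis assoc)
  also have "\<dots> = s \<cdot> (s\<^sup>\<star> \<cdot> s) \<cdot> (u\<^sup>\<star> \<cdot> u)"
    using idempotents_commute[OF idempotent_domain idempotent_domain] idempotent_domain
    by (metis assoc)
  also have "\<dots> = u" using u by simp
  finally show ?thesis .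
qed

lemma nat_le_inverse: assumes "nat_le m u s" shows "nat_le m (u\<^sup>\<star>) (s\<^sup>\<star>)"
proof -
  have "s\<^sup>\<star> \<cdot> (u \<cdot> u\<^sup>\<star>) = s\<^sup>\<star> \<cdot> (s \<cdot> (u\<^sup>\<star> \<cdot> u) \<cdot> (u\<^sup>\<star> \<cdot> u \<cdot> s\<^sup>\<star>))"
    using assms inverse_of_nat_le[OF assms] unfolding nat_le_def by metis
  also have "\<dots> = s\<^sup>\<star> \<cdot> s \<cdot> (u\<^sup>\<star> \<cdot> u) \<cdot> s\<^sup>\<star>"
    using idempotent_domain by (metis assoc)
  also have "\<dots> = u\<^sup>\<star> \<cdot> u \<cdot> (s\<^sup>\<star> \<cdot> s) \<cdot> s\<^sup>\<star>"
    using idempotents_commute[OF idempotent_domain idempotent_domain] by metis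
  also have "\<dots> = u\<^sup>\<star>" using inverse_of_nat_le[OF assms] by (simp add: assoc)
  finally show ?thesis unfolding nat_le_def by simp
qed

lemma nat_le_domain: assumes "nat_le m u s" shows "s\<^sup>\<star> \<cdot> s \<cdot> (u\<^sup>\<star> \<cdot> u) = u\<^sup>\<star> \<cdot> u"
proof -
  have "u\<^sup>\<star> \<cdot> u = u\<^sup>\<star> \<cdot> u \<cdot> (s\<^sup>\<star> \<cdot> s) \<cdot> (u\<^sup>\<star> \<cdot> u)"
    using assms inverse_of_nat_le[OF assms] unfolding nat_le_def by (metis assoc)
  also have "\<dots> = s\<^sup>\<star> \<cdot> s \<cdot> (u\<^sup>\<star> \<cdot> u)"
    using idempotents_commute[OF idempotent_domain idempotent_domain] idempotent_domain
    by (metis assoc)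
  finally show ?thesis by simp
qed

section \<open>The minimum group congruence\<close>

definition sigma_equiv :: "'a \<Rightarrow> 'a \<Rightarrow> bool" where
  "sigma_equiv s t \<longleftrightarrow> (\<exists>e. e \<cdot> e = e \<and> e \<cdot> s = e \<cdot> t)"

lemma mgi_rel_eq_sigma_equiv: "mgi_rel m = {(s, t). sigma_equiv s t}"
proof -
  have "(\<exists>u. nat_le m u s \<and> nat_le m u t) \<longleftrightarrow> sigma_equiv s t" for s t
  proof
    assume "\<exists>u. nat_le m u s \<and> nat_le m u t"
    then show "sigma_equiv s t" unfolding sigma_equiv_def using nat_le_range_mult idempotent_range by metis
  next
    assume "sigma_equiv s t"
    then show "\<exists>u. nat_le m u s \<and> nat_le m u t"
      unfolding sigma_equiv_def using nat_le_idempotent_left by metis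
  qed
  then show ?thesis unfolding mgi_rel_def by auto
qed

lemma sigma_equiv_refl: "sigma_equiv s s"
  unfolding sigma_equiv_def using idempotent_range by blast

lemma sigma_equiv_sym: "sigma_equiv s t \<Longrightarrow> sigma_equiv t s"
  unfolding sigma_equiv_def by metis

lemma sigma_equiv_trans: assumes "sigma_equiv s t" "sigma_equiv t r" shows "sigma_equiv s r"
proof -
  obtain e where e: "e \<cdot> e = e" "e \<cdot> s = e \<cdot> t" using assms(1) unfolding sigma_equiv_def by blast
  obtain f where f: "f \<cdot> f = f" "f \<cdot> t = f \<cdot> r" using assms(2) unfolding sigma_equiv_def by blast
  have "e \<cdot> f \<cdot> s = e \<cdot> f \<cdot> r" by (metis assoc e f idempotents_commute)
  then show ?thesis unfolding sigma_equiv_def using idempotent_mult[OF e(1) f(1)] by blast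
qed

lemma sigma_equiv_mult_right: "sigma_equiv s t \<Longrightarrow> sigma_equiv (s \<cdot> r) (t \<cdot> r)"
  unfolding sigma_equiv_def by (metis assoc)

lemma sigma_equiv_mult_left: assumes "sigma_equiv s t" shows "sigma_equiv (r \<cdot> s) (r \<cdot> t)"
proof -
  obtain e where e: "e \<cdot> e = e" "e \<cdot> s = e \<cdot> t" using assms unfolding sigma_equiv_def by blast
  have "r \<cdot> e \<cdot> r\<^sup>\<star> \<cdot> (r \<cdot> x) = r \<cdot> (e \<cdot> x)" for x
    using idempotents_commute_left[OF e(1) idempotent_domain] by (metis assoc inverse_laws(1))
  then have "r \<cdot> e \<cdot> r\<^sup>\<star> \<cdot> (r \<cdot> s) = r \<cdot> e \<cdot> r\<^sup>\<star> \<cdot> (r \<cdot> t)" using e(2) by simp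
  then show ?thesis unfolding sigma_equiv_def using idempotent_conjugate[OF e(1)] by blast
qed

lemma sigma_equiv_mult: "sigma_equiv a s \<Longrightarrow> sigma_equiv b t \<Longrightarrow> sigma_equiv (a \<cdot> b) (s \<cdot> t)"
  by (meson sigma_equiv_mult_left sigma_equiv_mult_right sigma_equiv_trans)

lemma sigma_equiv_inverse: "sigma_equiv s t \<Longrightarrow> sigma_equiv (s\<^sup>\<star>) (t\<^sup>\<star>)"
  using mgi_rel_eq_sigma_equiv nat_le_inverse unfolding mgi_rel_def by blast

lemma sigma_equiv_mult_idempotent: assumes e: "e \<cdot> e = e" shows "sigma_equiv (s \<cdot> e) s"
proof -
  have c: "e \<cdot> (s\<^sup>\<star> \<cdot> s) = s\<^sup>\<star> \<cdot> s \<cdot> e" by (rule idempotents_commute[OF e idempotent_domain])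
  have "s \<cdot> e \<cdot> s\<^sup>\<star> \<cdot> (s \<cdot> e) = s \<cdot> e \<cdot> s\<^sup>\<star> \<cdot> s" by (metis assoc c e inverse_laws(1))
  then show ?thesis unfolding sigma_equiv_def using idempotent_conjugate[OF e] by blast
qed

lemma mem_cls_iff: "t \<in> cls m s \<longleftrightarrow> sigma_equiv s t"
  unfolding cls_def mgi_rel_eq_sigma_equiv by auto

lemma cls_eqI: "sigma_equiv s t \<Longrightarrow> cls m s = cls m t"
  unfolding set_eq_iff mem_cls_iff by (meson sigma_equiv_sym sigma_equiv_trans)

lemma cls_self: "s \<in> cls m s"
  using sigma_equiv_refl mem_cls_iff by blast

lemma cls_in_G_carrier: "cls m a \<in> G_carrier m"
  unfolding G_carrier_def cls_def by (simp add: quotientI)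

lemma G_carrier_E:
  assumes "c \<in> G_carrier m" obtains a where "c = cls m a"
  using assms unfolding G_carrier_def cls_def by (auto elim: quotientE)

lemma G_mult_cls: "G_mult m (cls m a) (cls m b) = cls m (a \<cdot> b)"
proof -
  have "(SOME x. x \<in> cls m a) \<in> cls m a" "(SOME x. x \<in> cls m b) \<in> cls m b"
    using cls_self by (metis someI)+
  then show ?thesis unfolding G_mult_def mem_cls_iff using sigma_equiv_mult cls_eqI by (metis sigma_equiv_sym)
qed

lemma G_star_cls: "G_star m (cls m a) = cls m (a\<^sup>\<star>)"
proof -
  have "(SOME x. x \<in> cls m a) \<in> cls m a" using cls_self by (metis someI)
  then show ?thesis unfolding G_star_def mem_cls_iff using sigma_equiv_inverse cls_eqI by (metis sigma_equiv_sym)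
qed

lemma mem_cls_inverse_iff: "t \<in> cls m (s\<^sup>\<star>) \<longleftrightarrow> t\<^sup>\<star> \<in> cls m s"
  unfolding mem_cls_iff by (metis sigma_equiv_inverse inverse_inverse)

lemma bex_cls_inverse: "(\<exists>s\<in>cls m (a\<^sup>\<star>). P s) \<longleftrightarrow> (\<exists>s\<in>cls m a. P (s\<^sup>\<star>))"
proof
  assume "\<exists>s\<in>cls m (a\<^sup>\<star>). P s"
  then obtain s where "s \<in> cls m (a\<^sup>\<star>)" "P s" by blast
  then have "s\<^sup>\<star> \<in> cls m a" "P ((s\<^sup>\<star>)\<^sup>\<star>)" by (simp_all add: mem_cls_inverse_iff)
  then show "\<exists>s\<in>cls m a. P (s\<^sup>\<star>)" by blast
next
  assume "\<exists>s\<in>cls m a. P (s\<^sup>\<star>)"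
  then obtain s where "s \<in> cls m a" "P (s\<^sup>\<star>)" by blast
  moreover have "s\<^sup>\<star> \<in> cls m (a\<^sup>\<star>)" using \<open>s \<in> cls m a\<close> mem_cls_inverse_iff by simp
  ultimately show "\<exists>s\<in>cls m (a\<^sup>\<star>). P s" by blast
qed

lemma E_unitary_if_good_action: assumes "good_action m T Xs \<theta>" shows "E_unitary m"
proof -
  have S_action: "top_partial_action T UNIV m (sinv m) Xs \<theta>"
    and idems: "idems m = {s. map_comp (\<theta> s) (\<theta> s) = \<theta> s}"
    using assms unfolding good_action_def by blast+
  obtain Xg \<theta>g
    where G_action: "top_partial_action T (G_carrier m) (G_mult m) (G_star m) Xg \<theta>g"
      and factors: "\<And>s x. x \<in> Xs (s\<^sup>\<star>) \<Longrightarrow> \<theta>g (cls m s) x = \<theta> s x"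
    using assms unfolding good_action_def by blast
  show ?thesis unfolding E_unitary_def
  proof (intro allI impI, elim conjE)
    fix e s assume "e \<in> idems m" and le: "nat_le m e s"
    then have e: "e \<cdot> e = e" unfolding idems_def by simp
    have "sigma_equiv e s" using le nat_le_refl mgi_rel_eq_sigma_equiv unfolding mgi_rel_def by blast
    then have cls_s: "cls m s = cls m e" using cls_eqI sigma_equiv_sym by blast
    have "y = x" if xy: "\<theta> s x = Some y" for x y
    proof (rule top_partial_action_fixes[OF G_action cls_in_G_carrier])
      show "G_star m (cls m e) = cls m e" "G_mult m (cls m e) (cls m e) = cls m e"
        unfolding G_star_cls G_mult_cls inverse_idempotent[OF e] e by simp_all
      have "x \<in> Xs (s\<^sup>\<star>)" using top_partial_action_dom[OF S_action] xy by blast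
      then show "\<theta>g (cls m e) x = Some y" using factors xy cls_s by metis
    qed
    then show "s \<in> idems m" using idems map_comp_idem_if_fixes by blast
  qed
qed

end

locale E_unitary_inverse_semigroup = inverse_semigroup +
  assumes E_unitary: "E_unitary m"
begin

lemma idempotent_if_idempotent_left:
  assumes e: "e \<cdot> e = e" and es: "e \<cdot> s \<cdot> (e \<cdot> s) = e \<cdot> s" shows "s \<cdot> s = s"
proof -
  have "e \<cdot> s \<in> idems m" using es unfolding idems_def by simp
  then have "s \<in> idems m"
    using E_unitary nat_le_idempotent_left[OF e] unfolding E_unitary_def by blast
  then show ?thesis unfolding idems_def by simp
qed

lemma sigma_equiv_imp_idempotent: assumes "sigma_equiv s t" shows "s\<^sup>\<star> \<cdot> t \<cdot> (s\<^sup>\<star> \<cdot> t) = s\<^sup>\<star> \<cdot> t"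
proof -
  obtain e where e: "e \<cdot> e = e" "e \<cdot> s = e \<cdot> t" using assms unfolding sigma_equiv_def by blast
  let ?f = "s\<^sup>\<star> \<cdot> e \<cdot> s"
  have f: "?f \<cdot> ?f = ?f" using idempotent_conjugate[OF e(1), of "s\<^sup>\<star>"] by simp
  have "?f \<cdot> (s\<^sup>\<star> \<cdot> t) = s\<^sup>\<star> \<cdot> (e \<cdot> (s \<cdot> s\<^sup>\<star> \<cdot> t))" by (simp add: assoc)
  also have "\<dots> = s\<^sup>\<star> \<cdot> (e \<cdot> t)"
    using idempotents_commute_left[OF e(1) idempotent_range] by (simp add: assoc)
  also have "\<dots> = ?f" using e(2) by (simp add: assoc)
  finally have "?f \<cdot> (s\<^sup>\<star> \<cdot> t) = ?f" .
  then have "?f \<cdot> (s\<^sup>\<star> \<cdot> t) \<cdot> (?f \<cdot> (s\<^sup>\<star> \<cdot> t)) = ?f \<cdot> (s\<^sup>\<star> \<cdot> t)" using f by simp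
  then show ?thesis by (rule idempotent_if_idempotent_left[OF f])
qed

lemma sigma_equiv_agree:
  assumes "sigma_equiv s t" "s\<^sup>\<star> \<cdot> s \<cdot> x = x" "t\<^sup>\<star> \<cdot> t \<cdot> x = x"
  shows "s \<cdot> x = t \<cdot> x"
proof -
  have "s \<cdot> t\<^sup>\<star> \<cdot> (s \<cdot> t\<^sup>\<star>) = s \<cdot> t\<^sup>\<star>"
    using sigma_equiv_imp_idempotent[OF sigma_equiv_inverse[OF assms(1)]] by simp
  then have meet: "s \<cdot> (t\<^sup>\<star> \<cdot> t) = t \<cdot> (s\<^sup>\<star> \<cdot> s)" by (rule compatible_meet)
  have "s \<cdot> x = s \<cdot> (t\<^sup>\<star> \<cdot> t) \<cdot> x" using assms(3) by (simp add: assoc)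
  also have "\<dots> = t \<cdot> x" using meet assms(2) by (simp add: assoc)
  finally show ?thesis .
qed

end

section \<open>The Wagner--Preston action\<close>

context inverse_semigroup
begin

text \<open>\<open>s\<close> acts by left multiplication from
  \<open>s\<^sup>\<star>\<cdot>s\<cdot>S\<close> onto \<open>s\<cdot>s\<^sup>\<star>\<cdot>S\<close>. The points are the singletons \<open>{x}\<close>, because the
  space of the theorem has type \<open>'a set\<close>.\<close>

definition wp_dom :: "'a \<Rightarrow> 'a set set" where
  "wp_dom s = (\<lambda>x. {x}) ` {x. s \<cdot> s\<^sup>\<star> \<cdot> x = x}"

definition wp_map :: "'a \<Rightarrow> 'a set \<rightharpoonup> 'a set" where
  "wp_map s A = (if A \<in> wp_dom (s\<^sup>\<star>) then Some {s \<cdot> the_elem A} else None)"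

abbreviation wp_space :: "'a set topology" where
  "wp_space \<equiv> discrete_topology (range (\<lambda>x. {x}))"

lemma singleton_mem_wp_dom_iff: "{x} \<in> wp_dom s \<longleftrightarrow> s \<cdot> s\<^sup>\<star> \<cdot> x = x"
  unfolding wp_dom_def by auto

lemma wp_dom_subset: "wp_dom s \<subseteq> range (\<lambda>x. {x})"
  unfolding wp_dom_def by auto

lemma wp_map_eq_Some_iff:
  "wp_map s A = Some B \<longleftrightarrow> (\<exists>x. A = {x} \<and> s\<^sup>\<star> \<cdot> s \<cdot> x = x \<and> B = {s \<cdot> x})"
  unfolding wp_map_def wp_dom_def by auto

lemma dom_wp_map: "dom (wp_map s) = wp_dom (s\<^sup>\<star>)"
  unfolding wp_map_def dom_def by (auto split: if_splits)

lemma wp_map_inverse: "wp_map (s\<^sup>\<star>) B = Some A \<longleftrightarrow> wp_map s A = Some B"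
  unfolding wp_map_eq_Some_iff by (auto simp: assoc)

lemma ran_wp_map: "ran (wp_map s) = wp_dom s"
proof -
  have "B \<in> ran (wp_map s) \<longleftrightarrow> B \<in> dom (wp_map (s\<^sup>\<star>))" for B
    using wp_map_inverse unfolding ran_def dom_def by blast
  then show ?thesis using dom_wp_map[of "s\<^sup>\<star>"] by auto
qed

lemma wp_map_mult: "map_le (map_comp (wp_map s) (wp_map t)) (wp_map (s \<cdot> t))"
  unfolding map_le_def
proof
  fix A assume "A \<in> dom (map_comp (wp_map s) (wp_map t))"
  then obtain C B where C: "map_comp (wp_map s) (wp_map t) A = Some C"
    and B: "wp_map t A = Some B" "wp_map s B = Some C"
    by (auto simp: map_comp_def split: option.splits)
  obtain x where x: "A = {x}" "t\<^sup>\<star> \<cdot> t \<cdot> x = x" "B = {t \<cdot> x}"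
    using B(1) wp_map_eq_Some_iff by blast
  have "s\<^sup>\<star> \<cdot> s \<cdot> (t \<cdot> x) = t \<cdot> x" "C = {s \<cdot> t \<cdot> x}"
    using B(2) x(3) wp_map_eq_Some_iff by (auto simp: assoc)
  then have "(s \<cdot> t)\<^sup>\<star> \<cdot> (s \<cdot> t) \<cdot> x = x" "C = {s \<cdot> t \<cdot> x}"
    using x(2) by (simp_all add: inverse_mult assoc)
  then have "wp_map (s \<cdot> t) A = Some C" using x(1) wp_map_eq_Some_iff by blast
  then show "map_comp (wp_map s) (wp_map t) A = wp_map (s \<cdot> t) A" using C by simp
qed

lemma wp_map_mono: assumes le: "nat_le m s t" shows "map_le (wp_map s) (wp_map t)"
  unfolding map_le_def
proof
  fix A assume "A \<in> dom (wp_map s)"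
  then obtain B where B: "wp_map s A = Some B" by blast
  then obtain x where x: "A = {x}" "s\<^sup>\<star> \<cdot> s \<cdot> x = x" "B = {s \<cdot> x}"
    unfolding wp_map_eq_Some_iff by blast
  have "t\<^sup>\<star> \<cdot> t \<cdot> x = t\<^sup>\<star> \<cdot> t \<cdot> (s\<^sup>\<star> \<cdot> s) \<cdot> x" using x(2) by (simp add: assoc)
  also have "\<dots> = x" using nat_le_domain[OF le] x(2) by simp
  finally have "t\<^sup>\<star> \<cdot> t \<cdot> x = x" .
  moreover have "s \<cdot> x = t \<cdot> (s\<^sup>\<star> \<cdot> s) \<cdot> x"
    using arg_cong[OF le[unfolded nat_le_def], of "\<lambda>y. y \<cdot> x"] .
  then have "s \<cdot> x = t \<cdot> x" using x(2) by (simp add: assoc)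
  ultimately have "wp_map t A = Some B" unfolding wp_map_eq_Some_iff using x by metis
  then show "wp_map s A = wp_map t A" using B by simp
qed

lemma wp_space_cover: "{x} \<in> wp_dom (x \<cdot> x\<^sup>\<star>)"
  unfolding singleton_mem_wp_dom_iff inverse_idempotent[OF idempotent_range] idempotent_range
  by (simp add: assoc)

lemma wp_partial_action: "top_partial_action wp_space UNIV m (sinv m) wp_dom wp_map"
  unfolding top_partial_action_def
proof (intro conjI ballI allI impI)
  fix s t x y
  show "openin wp_space (wp_dom s)" using wp_dom_subset by simp
  show "dom (wp_map s) = wp_dom (s\<^sup>\<star>)" by (rule dom_wp_map)
  show "ran (wp_map s) = wp_dom s" by (rule ran_wp_map)
  have "inj_on (wp_map s) (wp_dom (s\<^sup>\<star>))"
    unfolding dom_wp_map[symmetric] using wp_map_inverse by (rule inj_on_dom_if_partial_inverse)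
  then show "homeomorphic_map (subtopology wp_space (wp_dom (s\<^sup>\<star>))) (subtopology wp_space (wp_dom s))
      (\<lambda>x. the (wp_map s x))"
    by (intro homeomorphic_map_discrete_partial dom_wp_map ran_wp_map wp_dom_subset)
  show "wp_map (s\<^sup>\<star>) y = Some x \<longleftrightarrow> wp_map s x = Some y" by (rule wp_map_inverse)
  show "map_le (map_comp (wp_map s) (wp_map t)) (wp_map (s \<cdot> t))" by (rule wp_map_mult)
  show "s = t \<cdot> (s\<^sup>\<star> \<cdot> s) \<Longrightarrow> map_le (wp_map s) (wp_map t)"
    by (rule wp_map_mono) (simp add: nat_le_def)
next
  show "topspace wp_space = (\<Union>e\<in>{e\<in>UNIV. e \<cdot> e = e}. wp_dom e)"
    using wp_space_cover wp_dom_subset idempotent_range by fastforce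
qed

lemma wp_Lambda_set: "Lambda_set m wp_space wp_dom wp_map = topspace wp_space"
proof -
  have "\<exists>e\<in>idems m. {x} \<in> wp_dom (e\<^sup>\<star>) \<and> nat_le m e s" if "wp_map s {x} = Some {x}" for s x
  proof -
    have sx: "s \<cdot> x = x" using that wp_map_eq_Some_iff by auto
    let ?e = "x \<cdot> x\<^sup>\<star>"
    have "?e \<in> idems m" unfolding idems_def using idempotent_range by simp
    moreover have "{x} \<in> wp_dom (?e\<^sup>\<star>)" using wp_space_cover by (simp add: inverse_mult)
    moreover have "nat_le m ?e s"
      unfolding nat_le_def inverse_idempotent[OF idempotent_range] idempotent_range
      using sx by (metis assoc)
    ultimately show ?thesis by blast
  qed
  then show ?thesis unfolding Lambda_set_def by auto
qed

lemma wp_top_principal: "top_principal m wp_space wp_dom wp_map"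
  unfolding top_principal_def wp_Lambda_set discrete_topology_closure_of by simp

lemma wp_idems: "idems m = {s. map_comp (wp_map s) (wp_map s) = wp_map s}"
proof (intro set_eqI iffI)
  fix s assume "s \<in> idems m"
  then have s: "s \<cdot> s = s" unfolding idems_def by simp
  have "wp_map s A = Some B \<Longrightarrow> B = A" for A B
    using wp_map_eq_Some_iff[of s A B] inverse_idempotent[OF s] s by auto
  then show "s \<in> {s. map_comp (wp_map s) (wp_map s) = wp_map s}"
    using map_comp_idem_if_fixes by blast
next
  fix s assume "s \<in> {s. map_comp (wp_map s) (wp_map s) = wp_map s}"
  then have idem: "map_comp (wp_map s) (wp_map s) = wp_map s" by simp
  have range_point: "wp_map s {s\<^sup>\<star>} = Some {s \<cdot> s\<^sup>\<star>}"
    unfolding wp_map_eq_Some_iff by (simp add: assoc)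
  then have "map_comp (wp_map s) (wp_map s) {s\<^sup>\<star>} = Some {s \<cdot> s\<^sup>\<star>}" using idem by simp
  then have "wp_map s {s \<cdot> s\<^sup>\<star>} = Some {s \<cdot> s\<^sup>\<star>}" using range_point by simp
  then have "s \<cdot> (s \<cdot> s\<^sup>\<star>) \<cdot> s = s \<cdot> s\<^sup>\<star> \<cdot> s" unfolding wp_map_eq_Some_iff by auto
  then show "s \<in> idems m" unfolding idems_def by (simp add: assoc)
qed

end

section \<open>Gluing a compatible action over the classes of \<open>G(S)\<close>\<close>

locale sigma_compatible_action = inverse_semigroup +
  fixes U :: "'b set" and Xs :: "'a \<Rightarrow> 'b set" and \<theta> :: "'a \<Rightarrow> 'b \<rightharpoonup> 'b"
  assumes action: "top_partial_action (discrete_topology U) UNIV m (sinv m) Xs \<theta>"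
    and compatible: "\<And>s t x. sigma_equiv s t \<Longrightarrow> x \<in> Xs (s\<^sup>\<star>) \<Longrightarrow> x \<in> Xs (t\<^sup>\<star>) \<Longrightarrow> \<theta> s x = \<theta> t x"
begin

definition glued_dom :: "'a set \<Rightarrow> 'b set" where
  "glued_dom c = (\<Union>s\<in>c. Xs s)"

definition glued_map :: "'a set \<Rightarrow> 'b \<rightharpoonup> 'b" where
  "glued_map c = glue c \<theta>"

lemma glued_map_eq_Some_iff: "glued_map (cls m a) x = Some y \<longleftrightarrow> (\<exists>s\<in>cls m a. \<theta> s x = Some y)"
  unfolding glued_map_def
proof (rule glue_eq_Some_iff)
  fix s t x assume st: "s \<in> cls m a" "t \<in> cls m a" and x: "x \<in> dom (\<theta> s)" "x \<in> dom (\<theta> t)"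
  have "sigma_equiv s t" using st mem_cls_iff sigma_equiv_sym sigma_equiv_trans by blast
  moreover have "x \<in> Xs (s\<^sup>\<star>)" "x \<in> Xs (t\<^sup>\<star>)" using x top_partial_action_dom[OF action UNIV_I] by simp_all
  ultimately show "\<theta> s x = \<theta> t x" by (rule compatible)
qed

lemma glued_map_extends: assumes "x \<in> Xs (s\<^sup>\<star>)" shows "glued_map (cls m s) x = \<theta> s x"
proof -
  obtain y where "\<theta> s x = Some y" using assms top_partial_action_dom[OF action UNIV_I] by blast
  then show ?thesis using glued_map_eq_Some_iff cls_self by metis
qed

lemma glued_map_inverse: "glued_map (cls m (a\<^sup>\<star>)) y = Some x \<longleftrightarrow> glued_map (cls m a) x = Some y"
proof -
  have "(\<exists>s\<in>cls m (a\<^sup>\<star>). \<theta> s y = Some x) \<longleftrightarrow> (\<exists>s\<in>cls m a. \<theta> s x = Some y)"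
    unfolding bex_cls_inverse top_partial_action_inverse[OF action UNIV_I] ..
  then show ?thesis unfolding glued_map_eq_Some_iff .
qed

lemma dom_glued_map: "dom (glued_map (cls m a)) = glued_dom (cls m (a\<^sup>\<star>))"
proof (intro set_eqI)
  fix x
  have "x \<in> dom (glued_map (cls m a)) \<longleftrightarrow> (\<exists>y. \<exists>s\<in>cls m a. \<theta> s x = Some y)"
    by (simp add: dom_def glued_map_eq_Some_iff)
  also have "\<dots> \<longleftrightarrow> (\<exists>s\<in>cls m a. x \<in> Xs (s\<^sup>\<star>))"
    using top_partial_action_dom[OF action UNIV_I] by blast
  also have "\<dots> \<longleftrightarrow> x \<in> glued_dom (cls m (a\<^sup>\<star>))"
    unfolding glued_dom_def UN_iff by (rule bex_cls_inverse[symmetric])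
  finally show "x \<in> dom (glued_map (cls m a)) \<longleftrightarrow> x \<in> glued_dom (cls m (a\<^sup>\<star>))" .
qed

lemma ran_glued_map: "ran (glued_map (cls m a)) = glued_dom (cls m a)"
proof -
  have "y \<in> ran (glued_map (cls m a)) \<longleftrightarrow> y \<in> dom (glued_map (cls m (a\<^sup>\<star>)))" for y
    using glued_map_inverse unfolding ran_def dom_def by blast
  then show ?thesis using dom_glued_map[of "a\<^sup>\<star>"] by auto
qed

lemma glued_map_mult:
  "map_le (map_comp (glued_map (cls m a)) (glued_map (cls m b))) (glued_map (cls m (a \<cdot> b)))"
  unfolding map_le_def
proof
  fix x assume "x \<in> dom (map_comp (glued_map (cls m a)) (glued_map (cls m b)))"
  then obtain z y where z: "map_comp (glued_map (cls m a)) (glued_map (cls m b)) x = Some z"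
    and y: "glued_map (cls m b) x = Some y" "glued_map (cls m a) y = Some z"
    by (auto simp: map_comp_def split: option.splits)
  obtain t where t: "t \<in> cls m b" "\<theta> t x = Some y" using y(1) glued_map_eq_Some_iff by blast
  obtain s where s: "s \<in> cls m a" "\<theta> s y = Some z" using y(2) glued_map_eq_Some_iff by blast
  have "\<theta> (s \<cdot> t) x = Some z"
    using top_partial_action_mult[OF action UNIV_I UNIV_I, of s t] t(2) s(2)
    unfolding map_le_def by (metis domI map_comp_simps(2))
  moreover have "s \<cdot> t \<in> cls m (a \<cdot> b)" using s(1) t(1) unfolding mem_cls_iff by (rule sigma_equiv_mult)
  ultimately have "glued_map (cls m (a \<cdot> b)) x = Some z" unfolding glued_map_eq_Some_iff by blast
  then show "map_comp (glued_map (cls m a)) (glued_map (cls m b)) x = glued_map (cls m (a \<cdot> b)) x"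
    using z by simp
qed

lemma glued_dom_subset: "glued_dom c \<subseteq> U"
  using top_partial_action_open[OF action] unfolding glued_dom_def by auto

lemma topspace_eq_glued_doms: "U = (\<Union>c\<in>{c\<in>G_carrier m. G_mult m c c = c}. glued_dom c)"
proof
  show "U \<subseteq> (\<Union>c\<in>{c\<in>G_carrier m. G_mult m c c = c}. glued_dom c)"
  proof
    fix x assume "x \<in> U"
    then obtain e where e: "e \<cdot> e = e" "x \<in> Xs e"
      using top_partial_action_topspace[OF action] by auto
    then have "x \<in> glued_dom (cls m e)" unfolding glued_dom_def using cls_self by blast
    moreover have "G_mult m (cls m e) (cls m e) = cls m e" unfolding G_mult_cls e(1) ..
    ultimately show "x \<in> (\<Union>c\<in>{c\<in>G_carrier m. G_mult m c c = c}. glued_dom c)"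
      using cls_in_G_carrier by blast
  qed
qed (use glued_dom_subset in blast)

lemma glued_partial_action:
  "top_partial_action (discrete_topology U) (G_carrier m) (G_mult m) (G_star m) glued_dom glued_map"
  unfolding top_partial_action_def
proof (intro conjI ballI allI impI)
  fix c d x y assume "c \<in> G_carrier m"
  then obtain a where a: "c = cls m a" by (rule G_carrier_E)
  show "openin (discrete_topology U) (glued_dom c)" using glued_dom_subset by simp
  show dom: "dom (glued_map c) = glued_dom (G_star m c)"
    unfolding a G_star_cls by (rule dom_glued_map)
  show ran: "ran (glued_map c) = glued_dom c" unfolding a by (rule ran_glued_map)
  have "inj_on (glued_map c) (glued_dom (G_star m c))"
    unfolding dom[symmetric] using glued_map_inverse unfolding a by (rule inj_on_dom_if_partial_inverse)
  then show "homeomorphic_map (subtopology (discrete_topology U) (glued_dom (G_star m c)))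
      (subtopology (discrete_topology U) (glued_dom c)) (\<lambda>x. the (glued_map c x))"
    by (intro homeomorphic_map_discrete_partial dom ran glued_dom_subset)
  show "glued_map (G_star m c) y = Some x \<longleftrightarrow> glued_map c x = Some y"
    unfolding a G_star_cls by (rule glued_map_inverse)
  assume "d \<in> G_carrier m"
  then obtain b where b: "d = cls m b" by (rule G_carrier_E)
  show "map_le (map_comp (glued_map c) (glued_map d)) (glued_map (G_mult m c d))"
    unfolding a b G_mult_cls by (rule glued_map_mult)
  assume "c = G_mult m d (G_mult m (G_star m c) c)"
  also have "\<dots> = cls m (b \<cdot> (a\<^sup>\<star> \<cdot> a))" unfolding a b G_star_cls G_mult_cls ..
  also have "\<dots> = d" unfolding b using cls_eqI sigma_equiv_mult_idempotent[OF idempotent_domain] by blast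
  finally show "map_le (glued_map c) (glued_map d)" by simp
next
  show "topspace (discrete_topology U) = (\<Union>c\<in>{c\<in>G_carrier m. G_mult m c c = c}. glued_dom c)"
    using topspace_eq_glued_doms by simp
qed

end

context E_unitary_inverse_semigroup
begin

lemma wp_compatible:
  assumes "sigma_equiv s t" "A \<in> wp_dom (s\<^sup>\<star>)" "A \<in> wp_dom (t\<^sup>\<star>)"
  shows "wp_map s A = wp_map t A"
proof -
  obtain x where x: "A = {x}" using assms(2) wp_dom_subset by blast
  have "s \<cdot> x = t \<cdot> x"
    using sigma_equiv_agree assms unfolding x singleton_mem_wp_dom_iff by simp
  then show ?thesis using assms(2,3) unfolding wp_map_def x by simp
qed

lemma wp_good_action: "good_action m wp_space wp_dom wp_map"
proof -
  interpret sigma_compatible_action m "range (\<lambda>x. {x})" wp_dom wp_map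
    by unfold_locales (use wp_partial_action wp_compatible in blast)+
  show ?thesis
    unfolding good_action_def
    using wp_partial_action wp_top_principal glued_partial_action glued_map_extends wp_idems by blast
qed

end

theorem theorem7p13:
  fixes m :: "'a \<Rightarrow> 'a \<Rightarrow> 'a"
  assumes "inv_semigroup m"
  shows "(E_unitary m \<longrightarrow> (\<exists>(T :: 'a set topology) Xs \<theta>. good_action m T Xs \<theta>)) \<and>
         ((\<exists>(T :: 'b topology) Xs \<theta>. good_action m T Xs \<theta>) \<longrightarrow> E_unitary m)"
proof (intro conjI impI)
  assume "E_unitary m"
  then interpret E_unitary_inverse_semigroup m
    using assms by (simp add: E_unitary_inverse_semigroup_def E_unitary_inverse_semigroup_axioms_def
        inverse_semigroup_def)
  show "\<exists>(T :: 'a set topology) Xs \<theta>. good_action m T Xs \<theta>" using wp_good_action by blast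
next
  interpret inverse_semigroup m using assms by (rule inverse_semigroup.intro)
  assume "\<exists>(T :: 'b topology) Xs \<theta>. good_action m T Xs \<theta>"
  then show "E_unitary m" using E_unitary_if_good_action by blast
qed

end
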